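(* Let $G$ be a connected threshold graph of order $n\ge 4$ and size $m$ with $n-1<m<\binom{n}{2}$, let $c$ be its number of type 1 vertices, $(b_1,\ldots,b_z)$ its backwards zero position sequence, $F_1=\sum_{i=1}^z b_i^2$, and $\rho$ the spectral radius of its adjacency matrix. Then the greatest real root $\xi$ of the polynomial $x^3-(c+1)x^2+cx-F_1$ satisfies $\xi\le 1+\rho$.
   Context: A threshold graph is a simple graph whose vertices can be ordered $v_1,\ldots,v_n$ so that for each $2\le i\le n$, $v_i$ is either adjacent to all of $v_1,\ldots,v_{i-1}$ (then $a_i=1$) or to none of them (then $a_i=0$); by convention $a_1=1$. Vertex $v_i$ is of type 1 if $a_i=1$ and of type 0 if $a_i=0$; $c$ and $z$ are the numbers of type 1 and type 0 vertices ($c+z=n$). The backwards zero position sequence $(b_1,\ldots,b_z)$ is defined by letting $b_i$ be the number of type 1 vertices appearing after the $i$-th type 0 vertex in the order $v_1,\ldots,v_n$. *)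

theory Defs
  imports "Jordan_Normal_Form.Spectral_Radius"
begin

text \<open>A threshold graph on vertices 0,...,n-1 is given by its creation sequence
  a = [a_1,...,a_n] (stored 0-indexed as a list of booleans, True = type 1),
  with the convention a_1 = True. Vertex j is adjacent to all earlier vertices
  iff a!j, so distinct i,j are adjacent iff a!(max i j).\<close>

definition thr_adj :: "bool list \<Rightarrow> nat \<Rightarrow> nat \<Rightarrow> bool" where
  "thr_adj a i j \<longleftrightarrow> i < length a \<and> j < length a \<and> i \<noteq> j \<and> a ! (max i j)"

definition thr_connected :: "bool list \<Rightarrow> bool" where
  "thr_connected a \<longleftrightarrow> (\<forall>i<length a. \<forall>j<length a. (thr_adj a)\<^sup>*\<^sup>* i j)"

definition thr_size :: "bool list \<Rightarrow> nat" where
  "thr_size a = card {(i, j). i < j \<and> j < length a \<and> thr_adj a i j}"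

definition thr_c :: "bool list \<Rightarrow> nat" where
  "thr_c a = length (filter id a)"

definition thr_bzp :: "bool list \<Rightarrow> nat list" where
  "thr_bzp a = map (\<lambda>p. length (filter id (drop (Suc p) a)))
                   (filter (\<lambda>p. \<not> a ! p) [0..<length a])"

definition thr_F1 :: "bool list \<Rightarrow> nat" where
  "thr_F1 a = sum_list (map (\<lambda>b. b ^ 2) (thr_bzp a))"

definition thr_adj_mat :: "bool list \<Rightarrow> complex mat" where
  "thr_adj_mat a = mat (length a) (length a) (\<lambda>(i, j). if thr_adj a i j then 1 else 0)"

end

theory Submission
  imports Defs "HOL-Analysis.Convex"
begin

text \<open>Let \<open>p(x) = x (x - 1) (x - c) - F\<^sub>1\<close> be the cubic of the theorem. For a parameter
  \<open>t > 0\<close> take the test vector that is \<open>1\<close> on the type 1 vertices and \<open>b\<^sub>i / t\<close> on the type 0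
  vertices. Its Rayleigh quotient for the adjacency matrix is at least \<open>t\<close> exactly when
  \<open>c t (t - c + 1) \<le> F\<^sub>1\<close>; choosing \<open>t\<close> as the positive root of this quadratic gives
  \<open>c \<rho> (\<rho> - c + 1) \<ge> F\<^sub>1\<close> and \<open>\<rho> \<ge> c - 1\<close>. Since \<open>1 + \<rho> \<ge> c\<close>, this yields \<open>p(1 + \<rho>) \<ge> 0\<close>,
  and \<open>p\<close> is increasing beyond \<open>1 + \<rho>\<close>, so no root exceeds \<open>1 + \<rho>\<close>.
  The Rayleigh bound for the spectral radius is obtained without an eigenbasis: if the
  spectral radius were smaller than the Rayleigh quotient, scaling would give a matrix
  with bounded powers whose quadratic forms along the vector \<open>x\<close> grow doubly
  exponentially by Cauchy-Schwarz.\<close>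

lemma pow_mat_add:
  assumes A: "A \<in> carrier_mat n n"
  shows "A ^\<^sub>m (i + j) = A ^\<^sub>m i * A ^\<^sub>m j"
proof (induction j)
  case 0
  then show ?case using A by simp
next
  case (Suc j)
  have "A ^\<^sub>m (i + Suc j) = (A ^\<^sub>m i * A ^\<^sub>m j) * A" using Suc by simp
  also have "\<dots> = A ^\<^sub>m i * (A ^\<^sub>m j * A)"
    by (rule assoc_mult_mat[of _ n n _ n _ n]) (use A in auto)
  finally show ?case by simp
qed

lemma transpose_pow_mat:
  fixes A :: "'a::comm_semiring_1 mat"
  assumes A: "A \<in> carrier_mat n n"
  shows "transpose_mat (A ^\<^sub>m k) = transpose_mat A ^\<^sub>m k"
proof (induction k)
  case 0
  then show ?case using A by simp
next
  case (Suc k)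
  have At: "transpose_mat A \<in> carrier_mat n n" using A by simp
  have "transpose_mat (A ^\<^sub>m Suc k) = transpose_mat A * transpose_mat A ^\<^sub>m k"
    using transpose_mult[OF pow_carrier_mat[OF A] A] Suc by simp
  also have "\<dots> = transpose_mat A ^\<^sub>m (1 + k)"
    using pow_mat_add[OF At, of 1 k] left_mult_one_mat[OF At] by simp
  finally show ?case by simp
qed

lemma scalar_prod_Cauchy_Schwarz:
  fixes x y :: "real vec"
  assumes "x \<in> carrier_vec n" and "y \<in> carrier_vec n"
  shows "(x \<bullet> y)\<^sup>2 \<le> (x \<bullet> x) * (y \<bullet> y)"
  using Cauchy_Schwarz_ineq_sum[of "\<lambda>i. x $ i" "\<lambda>i. y $ i" "{0..<n}"] assms
  by (simp add: scalar_prod_def power2_eq_square)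

lemma quadratic_form_eq_sum:
  assumes "A \<in> carrier_mat n n" and "x \<in> carrier_vec n"
  shows "x \<bullet> (A *\<^sub>v x) = (\<Sum>i<n. \<Sum>j<n. x $ i * A $$ (i, j) * x $ j)"
  using assms
  by (auto simp: scalar_prod_def mult_mat_vec_def sum_distrib_left lessThan_atLeast0 mult.assoc
      intro!: sum.cong)

lemma quadratic_form_square:
  fixes P :: "'a::comm_semiring_1 mat"
  assumes P: "P \<in> carrier_mat n n" and sym: "transpose_mat P = P" and x: "x \<in> carrier_vec n"
  shows "x \<bullet> ((P * P) *\<^sub>v x) = (P *\<^sub>v x) \<bullet> (P *\<^sub>v x)"
proof -
  have "x \<bullet> ((P * P) *\<^sub>v x) = x \<bullet> (P *\<^sub>v (P *\<^sub>v x))" using P x by simp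
  also have "\<dots> = (transpose_mat P *\<^sub>v x) \<bullet> (P *\<^sub>v x)"
    using transpose_vec_mult_scalar[OF P _ x, of "P *\<^sub>v x"] P x by simp
  finally show ?thesis using sym by simp
qed

lemma abs_quadratic_form_le:
  fixes A :: "real mat" and x :: "real vec"
  assumes A: "A \<in> carrier_mat n n" and x: "x \<in> carrier_vec n"
    and entries: "\<And>i j. i < n \<Longrightarrow> j < n \<Longrightarrow> \<bar>A $$ (i, j)\<bar> \<le> C"
  shows "\<bar>x \<bullet> (A *\<^sub>v x)\<bar> \<le> C * (\<Sum>i<n. \<bar>x $ i\<bar>)\<^sup>2"
proof -
  have "\<bar>x \<bullet> (A *\<^sub>v x)\<bar> \<le> (\<Sum>i<n. \<Sum>j<n. \<bar>x $ i * A $$ (i, j) * x $ j\<bar>)"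
    unfolding quadratic_form_eq_sum[OF A x]
    by (rule order_trans[OF sum_abs], rule sum_mono, rule sum_abs)
  also have "\<dots> \<le> (\<Sum>i<n. \<Sum>j<n. C * (\<bar>x $ i\<bar> * \<bar>x $ j\<bar>))"
  proof (intro sum_mono)
    fix i j assume "i \<in> {..<n}" "j \<in> {..<n}"
    then have "\<bar>x $ i\<bar> * \<bar>A $$ (i, j)\<bar> * \<bar>x $ j\<bar> \<le> \<bar>x $ i\<bar> * C * \<bar>x $ j\<bar>"
      using entries by (intro mult_right_mono mult_left_mono) auto
    then show "\<bar>x $ i * A $$ (i, j) * x $ j\<bar> \<le> C * (\<bar>x $ i\<bar> * \<bar>x $ j\<bar>)"
      by (simp add: abs_mult algebra_simps)
  qed
  also have "\<dots> = C * (\<Sum>i<n. \<Sum>j<n. \<bar>x $ i\<bar> * \<bar>x $ j\<bar>)"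
    by (simp add: sum_distrib_left)
  also have "\<dots> = C * (\<Sum>i<n. \<bar>x $ i\<bar>)\<^sup>2"
    by (simp add: power2_eq_square sum_product)
  finally show ?thesis .
qed

lemma quadratic_form_pow2_ge:
  fixes M :: "real mat" and x :: "real vec"
  assumes M: "M \<in> carrier_mat n n" and sym: "transpose_mat M = M"
    and x: "x \<in> carrier_vec n" and x0: "0 < x \<bullet> x" and \<nu>: "0 \<le> \<nu>"
    and ray: "\<nu> * (x \<bullet> x) \<le> x \<bullet> (M *\<^sub>v x)"
  shows "\<nu> ^ 2 ^ k * (x \<bullet> x) \<le> x \<bullet> (M ^\<^sub>m 2 ^ k *\<^sub>v x)"
proof (induction k)
  case 0
  then show ?case using ray M by (simp add: left_mult_one_mat[OF M])
next
  case (Suc k)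
  define P where "P = M ^\<^sub>m 2 ^ k"
  have P: "P \<in> carrier_mat n n" unfolding P_def using M by simp
  have "transpose_mat P = P" unfolding P_def transpose_pow_mat[OF M] sym ..
  then have square: "x \<bullet> (M ^\<^sub>m 2 ^ Suc k *\<^sub>v x) = (P *\<^sub>v x) \<bullet> (P *\<^sub>v x)"
    using quadratic_form_square[OF P _ x] pow_mat_add[OF M, of "2 ^ k" "2 ^ k"]
    by (simp add: P_def mult_2)
  have "(\<nu> ^ 2 ^ k * (x \<bullet> x))\<^sup>2 \<le> (x \<bullet> (P *\<^sub>v x))\<^sup>2"
    using Suc \<nu> x0 unfolding P_def by (intro power_mono) auto
  also have "\<dots> \<le> (x \<bullet> x) * ((P *\<^sub>v x) \<bullet> (P *\<^sub>v x))"
    using P x by (intro scalar_prod_Cauchy_Schwarz) auto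
  finally have "(x \<bullet> x) * (\<nu> ^ 2 ^ Suc k * (x \<bullet> x)) \<le> (x \<bullet> x) * (x \<bullet> (M ^\<^sub>m 2 ^ Suc k *\<^sub>v x))"
    unfolding square by (simp add: power2_eq_square power_mult[symmetric] power_add[symmetric]
        mult_2 algebra_simps)
  then show ?case using x0 by simp
qed

lemma sym_mat_pow_entries_unbounded:
  fixes M :: "real mat" and x :: "real vec"
  assumes M: "M \<in> carrier_mat n n" and sym: "transpose_mat M = M"
    and x: "x \<in> carrier_vec n" and x0: "0 < x \<bullet> x" and \<nu>: "1 < \<nu>"
    and ray: "\<nu> * (x \<bullet> x) \<le> x \<bullet> (M *\<^sub>v x)"
  shows "\<exists>k i j. i < n \<and> j < n \<and> C < \<bar>(M ^\<^sub>m k) $$ (i, j)\<bar>"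
proof (rule ccontr)
  assume "\<not> ?thesis"
  then have entries: "\<bar>(M ^\<^sub>m k) $$ (i, j)\<bar> \<le> C" if "i < n" "j < n" for k i j
    using that by (meson not_le)
  define D where "D = C * (\<Sum>i<n. \<bar>x $ i\<bar>)\<^sup>2"
  have "\<nu> ^ k \<le> D / (x \<bullet> x)" for k
  proof -
    have "\<nu> ^ k \<le> \<nu> ^ 2 ^ k"
      using \<nu> by (intro power_increasing) (auto intro: less_imp_le[OF less_exp])
    moreover have "\<bar>x \<bullet> (M ^\<^sub>m 2 ^ k *\<^sub>v x)\<bar> \<le> D"
      unfolding D_def by (rule abs_quadratic_form_le[OF pow_carrier_mat[OF M] x entries])
    then have "\<nu> ^ 2 ^ k * (x \<bullet> x) \<le> D"
      using quadratic_form_pow2_ge[OF M sym x x0 _ ray, of k] \<nu> by linarith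
    ultimately show ?thesis
      using x0 by (simp add: pos_le_divide_eq) (meson mult_right_mono less_imp_le order_trans)
  qed
  moreover obtain k where "D / (x \<bullet> x) < \<nu> ^ k" using real_arch_pow[OF \<nu>] by blast
  ultimately show False by (meson not_le)
qed

lemma spectral_radius_smult_ge:
  fixes A :: "complex mat"
  assumes A: "A \<in> carrier_mat n n" and n: "0 < n"
  shows "norm c * spectral_radius A \<le> spectral_radius (c \<cdot>\<^sub>m A)"
proof -
  from spectral_radius_mem_max(1)[OF A n] obtain l
    where "l \<in> spectrum A" and radius: "spectral_radius A = norm l" by auto
  then obtain v where v: "v \<in> carrier_vec n" "v \<noteq> 0\<^sub>v n" "A *\<^sub>v v = l \<cdot>\<^sub>v v"
    unfolding spectrum_def eigenvalue_def eigenvector_def using A by auto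
  have "(c \<cdot>\<^sub>m A) *\<^sub>v v = (c * l) \<cdot>\<^sub>v v"
  proof -
    have "(c \<cdot>\<^sub>m A) *\<^sub>v v = c \<cdot>\<^sub>v (A *\<^sub>v v)"
      using A v(1) by (intro eq_vecI) (auto simp: scalar_prod_def sum_distrib_left mult.assoc)
    then show ?thesis using v(3) by (simp add: smult_smult_assoc)
  qed
  then have "c * l \<in> spectrum (c \<cdot>\<^sub>m A)"
    unfolding spectrum_def eigenvalue_def eigenvector_def using A v by auto
  then have "norm (c * l) \<le> spectral_radius (c \<cdot>\<^sub>m A)"
    using A n by (intro spectral_radius_mem_max(2)[of _ n]) auto
  then show ?thesis by (simp add: radius norm_mult)
qed

lemma spectral_radius_ge_Rayleigh_quotient:
  fixes A :: "real mat" and x :: "real vec"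
  assumes A: "A \<in> carrier_mat n n" and sym: "transpose_mat A = A"
    and x: "x \<in> carrier_vec n" and x0: "0 < x \<bullet> x"
    and ray: "\<mu> * (x \<bullet> x) \<le> x \<bullet> (A *\<^sub>v x)"
  shows "\<mu> \<le> spectral_radius (map_mat complex_of_real A)"
proof (rule ccontr)
  define \<rho> where "\<rho> = spectral_radius (map_mat complex_of_real A)"
  assume "\<not> ?thesis"
  then have \<rho>\<mu>: "\<rho> < \<mu>" unfolding \<rho>_def by simp
  have n: "0 < n" using x x0 by (cases n) (auto simp: scalar_prod_def)
  have "0 \<le> \<rho>" using spectral_radius_mem_max(1)[OF _ n, of "map_mat complex_of_real A"] A
    unfolding \<rho>_def by auto
  define r where "r = (\<rho> + \<mu>) / 2"
  have r: "0 < r" "\<rho> < r" "r < \<mu>" unfolding r_def using \<open>0 \<le> \<rho>\<close> \<rho>\<mu> by auto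
  define B where "B = (1 / r) \<cdot>\<^sub>m A"
  have B: "B \<in> carrier_mat n n" unfolding B_def using A by simp
  have B': "map_mat complex_of_real B \<in> carrier_mat n n" using B by simp
  have "r * spectral_radius (map_mat complex_of_real B) \<le> \<rho>"
  proof -
    have "map_mat complex_of_real A = complex_of_real r \<cdot>\<^sub>m map_mat complex_of_real B"
      unfolding B_def using A r by (intro eq_matI) auto
    then show ?thesis
      using spectral_radius_smult_ge[OF B' n, of "complex_of_real r"] r unfolding \<rho>_def by simp
  qed
  then have "r * spectral_radius (map_mat complex_of_real B) < r * 1" using r by linarith
  then have "spectral_radius (map_mat complex_of_real B) < 1" using r by simp
  from spectral_radius_jnf_norm_bound_less_1_upper_triangular[OF B' this]
  obtain C where C: "\<And>k. norm_bound (map_mat complex_of_real B ^\<^sub>m k) C" by auto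
  have sym_B: "transpose_mat B = B"
  proof (rule eq_matI)
    fix i j assume "i < dim_row B" "j < dim_col B"
    then show "transpose_mat B $$ (i, j) = B $$ (i, j)"
      using B A arg_cong[OF sym, of "\<lambda>M. M $$ (i, j)"] unfolding B_def by auto
  qed (use B in auto)
  have ray_B: "\<mu> / r * (x \<bullet> x) \<le> x \<bullet> (B *\<^sub>v x)"
  proof -
    have "x \<bullet> (B *\<^sub>v x) = (1 / r) * (x \<bullet> (A *\<^sub>v x))"
      unfolding quadratic_form_eq_sum[OF B x] quadratic_form_eq_sum[OF A x] sum_distrib_left
      using A by (auto simp: B_def intro!: sum.cong)
    then show ?thesis using ray r by (simp add: field_simps)
  qed
  have "1 < \<mu> / r" using r by simp
  from sym_mat_pow_entries_unbounded[OF B sym_B x x0 this ray_B]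
  obtain k i j where ij: "i < n" "j < n" and big: "C < \<bar>(B ^\<^sub>m k) $$ (i, j)\<bar>" by blast
  have "map_mat complex_of_real B ^\<^sub>m k = map_mat complex_of_real (B ^\<^sub>m k)"
    by (rule of_real_hom.mat_hom_pow[OF B, symmetric])
  then have "\<bar>(B ^\<^sub>m k) $$ (i, j)\<bar> \<le> C" using C[of k] ij B unfolding norm_bound_def by auto
  with big show False by simp
qed

lemma sum_indicator_eq_card:
  fixes n :: nat
  shows "(\<Sum>j<n. if P j then (1::real) else 0) = real (card {j. j < n \<and> P j})"
  by (simp add: sum.If_cases Int_def conj_commute)

lemma sum_if_eq_sum_filter:
  fixes n :: nat
  shows "(\<Sum>j<n. if P j then f j else 0) = (\<Sum>j | j < n \<and> P j. f j)"
  by (rule sum.mono_neutral_cong_right) auto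

definition thr_ones_after :: "bool list \<Rightarrow> nat \<Rightarrow> nat" where
  "thr_ones_after a p = card {j. p < j \<and> j < length a \<and> a ! j}"

lemma thr_c_eq_card: "thr_c a = card {i. i < length a \<and> a ! i}"
  unfolding thr_c_def by (simp add: length_filter_conv_card)

lemma length_filter_drop_eq_thr_ones_after:
  "length (filter id (drop (Suc p) a)) = thr_ones_after a p"
proof -
  have "length (filter id (drop (Suc p) a)) = card {i. i < length a - Suc p \<and> drop (Suc p) a ! i}"
    by (simp add: length_filter_conv_card)
  also have "\<dots> = card {i. i < length a - Suc p \<and> a ! (Suc p + i)}"
    by (rule arg_cong[where f=card]) (auto simp: nth_drop)
  also have "\<dots> = card ((+) (Suc p) ` {i. i < length a - Suc p \<and> a ! (Suc p + i)})"
    by (rule card_image[symmetric]) (simp add: inj_on_def)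
  also have "(+) (Suc p) ` {i. i < length a - Suc p \<and> a ! (Suc p + i)}
      = {j. p < j \<and> j < length a \<and> a ! j}"
  proof -
    have "j \<in> (+) (Suc p) ` {i. i < length a - Suc p \<and> a ! (Suc p + i)}"
      if "p < j" "j < length a" "a ! j" for j
      using that by (auto intro!: image_eqI[of _ _ "j - Suc p"])
    then show ?thesis by auto
  qed
  finally show ?thesis unfolding thr_ones_after_def .
qed

lemma thr_F1_eq_sum: "thr_F1 a = (\<Sum>p | p < length a \<and> \<not> a ! p. (thr_ones_after a p)\<^sup>2)"
proof -
  have "thr_F1 a = sum_list (map (\<lambda>p. (thr_ones_after a p)\<^sup>2) (filter (\<lambda>p. \<not> a ! p) [0..<length a]))"
    unfolding thr_F1_def thr_bzp_def by (simp add: length_filter_drop_eq_thr_ones_after comp_def)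
  also have "\<dots> = (\<Sum>p\<in>set (filter (\<lambda>p. \<not> a ! p) [0..<length a]). (thr_ones_after a p)\<^sup>2)"
    by (rule sum_list_distinct_conv_sum_set) simp
  finally show ?thesis by (simp add: conj_commute)
qed

definition thr_adj_rmat :: "bool list \<Rightarrow> real mat" where
  "thr_adj_rmat a = mat (length a) (length a) (\<lambda>(i, j). if thr_adj a i j then 1 else 0)"

lemma thr_adj_rmat_carrier: "thr_adj_rmat a \<in> carrier_mat (length a) (length a)"
  unfolding thr_adj_rmat_def by simp

lemma thr_adj_mat_eq_of_real: "thr_adj_mat a = map_mat complex_of_real (thr_adj_rmat a)"
  unfolding thr_adj_mat_def thr_adj_rmat_def by (intro eq_matI) auto

lemma transpose_thr_adj_rmat: "transpose_mat (thr_adj_rmat a) = thr_adj_rmat a"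
  unfolding thr_adj_rmat_def by (intro eq_matI) (auto simp: thr_adj_def max.commute)

definition thr_test_vec :: "bool list \<Rightarrow> real \<Rightarrow> real vec" where
  "thr_test_vec a t = vec (length a) (\<lambda>i. if a ! i then 1 else real (thr_ones_after a i) / t)"

lemma thr_test_vec_carrier: "thr_test_vec a t \<in> carrier_vec (length a)"
  unfolding thr_test_vec_def by simp

lemma thr_test_vec_norm:
  "thr_test_vec a t \<bullet> thr_test_vec a t = real (thr_c a) + real (thr_F1 a) / t\<^sup>2"
proof -
  define n where "n = length a"
  have "thr_test_vec a t \<bullet> thr_test_vec a t
      = (\<Sum>i<n. (if a ! i then 1 else real (thr_ones_after a i) / t)\<^sup>2)"
    unfolding thr_test_vec_def scalar_prod_def n_def by (simp add: lessThan_atLeast0 power2_eq_square)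
  also have "\<dots> = (\<Sum>i<n. (if a ! i then 1 else 0)
      + (if \<not> a ! i then real ((thr_ones_after a i)\<^sup>2) / t\<^sup>2 else 0))"
    by (rule sum.cong) (auto simp: power_divide)
  also have "\<dots> = real (thr_c a) + real (thr_F1 a) / t\<^sup>2"
    unfolding sum.distrib sum_indicator_eq_card sum_if_eq_sum_filter thr_c_eq_card thr_F1_eq_sum n_def
    by (simp add: sum_divide_distrib)
  finally show ?thesis .
qed

text \<open>A type 0 vertex \<open>i\<close> is adjacent exactly to the \<open>b\<^sub>i\<close> type 1 vertices after it, and
  each such edge contributes \<open>b\<^sub>i / t\<close> twice to the quadratic form.\<close>

lemma thr_test_vec_quadratic_form:
  "thr_test_vec a t \<bullet> (thr_adj_rmat a *\<^sub>v thr_test_vec a t)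
     = real (thr_c a) * (real (thr_c a) - 1) + 2 * real (thr_F1 a) / t"
proof -
  define n where "n = length a"
  define c where "c = thr_c a"
  define x where "x = thr_test_vec a t"
  define b where "b i = real (thr_ones_after a i) / t" for i
  define ones where "ones i j = (if a ! i \<and> a ! j \<and> j \<noteq> i then 1 else (0::real))" for i j
  define zero_one where "zero_one i j = (if \<not> a ! i \<and> a ! j \<and> i < j then b i else 0)" for i j
  define one_zero where "one_zero i j = (if a ! i \<and> \<not> a ! j \<and> j < i then b j else 0)" for i j
  have "x $ i * thr_adj_rmat a $$ (i, j) * x $ j = ones i j + zero_one i j + one_zero i j"
    if "i < n" "j < n" for i j
    using that unfolding n_def
    by (cases "a ! i"; cases "a ! j"; cases "i < j"; cases "i = j";
        simp add: x_def b_def thr_test_vec_def thr_adj_rmat_def ones_def zero_one_def one_zero_def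
          thr_adj_def max_def)
  then have split: "x \<bullet> (thr_adj_rmat a *\<^sub>v x) = (\<Sum>i<n. \<Sum>j<n. ones i j)
      + (\<Sum>i<n. \<Sum>j<n. zero_one i j) + (\<Sum>i<n. \<Sum>j<n. one_zero i j)"
    unfolding x_def n_def
    by (simp add: quadratic_form_eq_sum[OF thr_adj_rmat_carrier thr_test_vec_carrier] sum.distrib)
  have "(\<Sum>j<n. ones i j) = (if a ! i then real c - 1 else 0)" if "i < n" for i
  proof (cases "a ! i")
    case True
    have "(\<Sum>j<n. ones i j) = real (card ({j. j < n \<and> a ! j} - {i}))"
      unfolding ones_def using True sum_indicator_eq_card[where n=n and P="\<lambda>j. a ! j \<and> j \<noteq> i"]
      by (simp add: set_diff_eq conj_ac cong: conj_cong)
    also have "\<dots> = real c - 1"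
      unfolding c_def thr_c_eq_card n_def using True that card_gt_0_iff[of "{j. j < length a \<and> a ! j}"]
      by (auto simp: of_nat_diff n_def)
    finally show ?thesis using True by simp
  qed (simp add: ones_def)
  then have ones: "(\<Sum>i<n. \<Sum>j<n. ones i j) = real c * (real c - 1)"
    by (simp add: sum_if_eq_sum_filter c_def thr_c_eq_card n_def)
  have "(\<Sum>j<n. zero_one i j) = (if \<not> a ! i then real ((thr_ones_after a i)\<^sup>2) / t else 0)" for i
  proof (cases "a ! i")
    case False
    have "(\<Sum>j<n. zero_one i j) = b i * (\<Sum>j<n. if a ! j \<and> i < j then 1 else 0)"
      unfolding zero_one_def using False by (simp add: sum_distrib_left if_distrib cong: if_cong)
    also have "(\<Sum>j<n. if a ! j \<and> i < j then (1::real) else 0) = real (thr_ones_after a i)"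
      unfolding sum_indicator_eq_card thr_ones_after_def n_def by (simp add: conj_ac)
    finally show ?thesis using False by (simp add: b_def power2_eq_square)
  qed (simp add: zero_one_def)
  then have zero_one: "(\<Sum>i<n. \<Sum>j<n. zero_one i j) = real (thr_F1 a) / t"
    by (simp add: sum_if_eq_sum_filter thr_F1_eq_sum n_def sum_divide_distrib)
  have "(\<Sum>i<n. \<Sum>j<n. one_zero i j) = (\<Sum>i<n. \<Sum>j<n. zero_one i j)"
    by (subst sum.swap) (auto simp: zero_one_def one_zero_def intro!: sum.cong)
  with split ones zero_one show ?thesis unfolding x_def c_def by simp
qed

lemma thr_c_ge_2:
  assumes "a ! 0" and "0 < thr_size a"
  shows "2 \<le> thr_c a"
proof -
  from assms(2) have "{(i, j). i < j \<and> j < length a \<and> thr_adj a i j} \<noteq> {}"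
    unfolding thr_size_def by (metis card.empty less_irrefl)
  then obtain i j where ij: "i < j" "j < length a" "thr_adj a i j" by auto
  then have "a ! j" unfolding thr_adj_def by (simp add: max_def)
  then have "{0, j} \<subseteq> {i. i < length a \<and> a ! i}" using ij assms(1) by auto
  then have "card {0, j} \<le> thr_c a" unfolding thr_c_eq_card by (intro card_mono) auto
  then show ?thesis using ij by simp
qed

lemma thr_spectral_radius_ge:
  assumes c: "0 < thr_c a" and t: "0 < t"
    and root: "real (thr_c a) * t * (t - real (thr_c a) + 1) \<le> real (thr_F1 a)"
  shows "t \<le> spectral_radius (thr_adj_mat a)"
proof -
  define x where "x = thr_test_vec a t"
  have "0 < x \<bullet> x"
    unfolding x_def thr_test_vec_norm using c by (simp add: add_pos_nonneg)
  moreover have "t * (x \<bullet> x) \<le> x \<bullet> (thr_adj_rmat a *\<^sub>v x)"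
  proof -
    have "x \<bullet> (thr_adj_rmat a *\<^sub>v x) - t * (x \<bullet> x)
        = (real (thr_F1 a) - real (thr_c a) * t * (t - real (thr_c a) + 1)) / t"
      unfolding x_def thr_test_vec_norm thr_test_vec_quadratic_form using t
      by (simp add: field_simps power2_eq_square)
    then show ?thesis using root t by (smt (verit) divide_nonneg_pos)
  qed
  ultimately show ?thesis
    unfolding thr_adj_mat_eq_of_real x_def
    by (intro spectral_radius_ge_Rayleigh_quotient[OF thr_adj_rmat_carrier
          transpose_thr_adj_rmat thr_test_vec_carrier])
qed

lemma thr_spectral_radius_bounds:
  assumes c2: "2 \<le> thr_c a"
  defines "c \<equiv> real (thr_c a)" and "\<rho> \<equiv> spectral_radius (thr_adj_mat a)"
  shows "c - 1 \<le> \<rho>" and "real (thr_F1 a) \<le> c * \<rho> * (\<rho> - c + 1)"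
proof -
  define F where "F = real (thr_F1 a)"
  define l where "l = ((c - 1) + sqrt ((c - 1)\<^sup>2 + 4 * F / c)) / 2"
  have c: "2 \<le> c" using c2 unfolding c_def by simp
  have "0 \<le> F" unfolding F_def by simp
  then have "c - 1 \<le> sqrt ((c - 1)\<^sup>2 + 4 * F / c)"
    using c by (intro real_le_rsqrt) auto
  then have l: "c - 1 \<le> l" unfolding l_def by simp
  have "c * l * (l - c + 1) = F"
  proof -
    have "(sqrt ((c - 1)\<^sup>2 + 4 * F / c))\<^sup>2 = (c - 1)\<^sup>2 + 4 * F / c"
      using \<open>0 \<le> F\<close> c by (intro real_sqrt_pow2) auto
    then show ?thesis
      unfolding l_def using c by (simp add: field_simps power2_eq_square)
  qed
  then have "l \<le> \<rho>"
    unfolding \<rho>_def using c2 c l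
    by (intro thr_spectral_radius_ge) (auto simp: c_def F_def)
  then show "c - 1 \<le> \<rho>" using l by simp
  have "c * l * (l - c + 1) \<le> c * \<rho> * (\<rho> - c + 1)"
    using \<open>l \<le> \<rho>\<close> l c by (intro mult_mono) auto
  then show "real (thr_F1 a) \<le> c * \<rho> * (\<rho> - c + 1)"
    using \<open>c * l * (l - c + 1) = F\<close> unfolding F_def by simp
qed

lemma cubic_Max_root_le:
  fixes c F y :: real
  assumes F: "0 \<le> F" and c: "1 \<le> c" "c \<le> y" and py: "F \<le> y * (y - 1) * (y - c)"
  shows "Max {x. x ^ 3 - (c + 1) * x\<^sup>2 + c * x - F = 0} \<le> y"
proof -
  define p where "p x = x * (x - 1) * (x - c) - F" for x
  have roots: "{x. x ^ 3 - (c + 1) * x\<^sup>2 + c * x - F = 0} = {x. poly [:-F, c, -(c + 1), 1:] x = 0}"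
    "{x. x ^ 3 - (c + 1) * x\<^sup>2 + c * x - F = 0} = {x. p x = 0}"
    unfolding p_def by (simp_all add: algebra_simps power2_eq_square power3_eq_cube)
  have "finite {x. x ^ 3 - (c + 1) * x\<^sup>2 + c * x - F = 0}"
    unfolding roots(1) by (rule poly_roots_finite) simp
  moreover have "\<exists>x. p x = 0"
  proof -
    have "continuous_on {0..y} p" unfolding p_def by (intro continuous_intros)
    then show ?thesis
      using IVT'[of p 0 0 y] F c py unfolding p_def by auto
  qed
  moreover have "x \<le> y" if "p x = 0" for x
  proof (rule ccontr)
    assume "\<not> x \<le> y"
    then have "y * (y - 1) * (y - c) < x * (x - 1) * (x - c)"
      using c by (intro mult_strict_mono' mult_mono) auto
    then show False using that py unfolding p_def by simp
  qed
  ultimately show ?thesis unfolding roots(2) by (subst Max_le_iff) auto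
qed

theorem theorem4p1:
  fixes a :: "bool list" and n m c :: nat and \<xi> \<rho> :: real
  assumes "length a = n" and "n \<ge> 4" and "a ! 0"
    and "thr_connected a"
    and "m = thr_size a" and "n - 1 < m" and "m < n choose 2"
    and "c = thr_c a"
    and "\<rho> = spectral_radius (thr_adj_mat a)"
    and "\<xi> = Max {x :: real. x ^ 3 - (real c + 1) * x ^ 2 + real c * x - real (thr_F1 a) = 0}"
  shows "\<xi> \<le> 1 + \<rho>"
proof -
  have c2: "2 \<le> c" using thr_c_ge_2[OF \<open>a ! 0\<close>] assms(5,6,8) by simp
  then have \<rho>: "real c - 1 \<le> \<rho>" "real (thr_F1 a) \<le> real c * \<rho> * (\<rho> - real c + 1)"
    using thr_spectral_radius_bounds[of a] assms(8,9) by auto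
  have "real c * \<rho> * (\<rho> - real c + 1) \<le> (1 + \<rho>) * \<rho> * (\<rho> - real c + 1)"
    using \<rho>(1) c2 by (intro mult_right_mono) auto
  then have "real (thr_F1 a) \<le> (1 + \<rho>) * (1 + \<rho> - 1) * (1 + \<rho> - real c)"
    using \<rho>(2) by (simp add: algebra_simps)
  with \<rho>(1) c2 show ?thesis
    unfolding assms(10) by (intro cubic_Max_root_le) auto
qed

end
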